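(* Consider a rate-1 Poisson point process in $\mathbb{R}^2$ with an extra point (city) planted at the origin. For $\sigma>0$ let $D(\sigma)$ be the sum of Euclidean distances between all pairs of cities lying within the disc of radius $\sigma$ centred at the origin. Then for any random variable $\Sigma\ge0$ (defined on the same probability space, possibly dependent on the point process) with all moments finite, the random variable $D(\Sigma)$ has all moments finite. *)

theory Defs
  imports "HOL-Probability.Probability"
begin

definition pcount :: "('a \<Rightarrow> (real^2) set) \<Rightarrow> (real^2) set \<Rightarrow> 'a \<Rightarrow> nat" where
  "pcount N B \<omega> = card (N \<omega> \<inter> B)"

definition poisson_pp :: "'a measure \<Rightarrow> ('a \<Rightarrow> (real^2) set) \<Rightarrow> bool" where
  "poisson_pp M N \<longleftrightarrow>
     prob_space M \<and>
     (\<forall>\<omega>\<in>space M. \<forall>B. bounded B \<longrightarrow> finite (N \<omega> \<inter> B)) \<and>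
     (\<forall>B \<in> sets lborel. bounded B \<longrightarrow>
        pcount N B \<in> measurable M (count_space UNIV) \<and>
        (\<forall>k::nat. measure M {\<omega> \<in> space M. pcount N B \<omega> = k}
                   = measure lborel B ^ k / fact k * exp (- measure lborel B))) \<and>
     (\<forall>(I::nat set) (B::nat \<Rightarrow> (real^2) set). finite I \<longrightarrow>
        (\<forall>i\<in>I. B i \<in> sets lborel \<and> bounded (B i)) \<longrightarrow>
        disjoint_family_on B I \<longrightarrow>
        prob_space.indep_vars M (\<lambda>_. count_space UNIV) (\<lambda>i. pcount N (B i)) I)"

text \<open>Cities: the points of the process together with an extra city at the origin.
\<open>pair_dist_sum N \<sigma> \<omega>\<close> is the sum of Euclidean distances over all unordered pairs of
distinct cities lying in the closed disc of radius \<open>\<sigma>\<close> about the origin (the ordered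
double sum counts each unordered pair twice, and diagonal terms vanish).\<close>

definition cities :: "('a \<Rightarrow> (real^2) set) \<Rightarrow> 'a \<Rightarrow> (real^2) set" where
  "cities N \<omega> = insert 0 (N \<omega>)"

definition pair_dist_sum :: "('a \<Rightarrow> (real^2) set) \<Rightarrow> real \<Rightarrow> 'a \<Rightarrow> real" where
  "pair_dist_sum N \<sigma> \<omega> =
     (let C = cities N \<omega> \<inter> cball 0 \<sigma> in (\<Sum>x\<in>C. \<Sum>y\<in>C. dist x y) / 2)"

end

theory Submission
  imports Defs
begin

(* Write X_j for the number of points of the process in the disc of radius j.
   Pointwise, all cities in the disc of radius s lie in the disc of radius
   \<lceil>s\<rceil>, and two of them are at distance at most 2s, so
     D(s)^k \<le> s^k (1 + X_\<lceil>s\<rceil>)^(2k) \<le> s^(2k) + (1 + X_\<lceil>s\<rceil>)^(4k).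
   The first term is integrable by hypothesis.  For the second, the random
   index \<lceil>\<Sigma>\<rceil> is removed by the elementary inequality a \<le> a\<^sup>2/w + w with
   w = (\<lceil>\<Sigma>\<rceil> + 1)^q: the term a\<^sup>2/w is dominated by the series
   \<Sum>_j (1 + X_j)^(8k) / (j+1)^q, whose expectation converges because X_j is
   Poisson with mean \<pi> j\<^sup>2 and so E (1 + X_j)^r grows only polynomially in j;
   the term w has finite expectation because \<Sigma> has all moments.
*)

lemma power_div_fact_le_exp:
  fixes y :: real
  assumes "y \<ge> 0"
  shows "y ^ r / fact r \<le> exp y"
proof -
  have s: "(\<lambda>n. y ^ n / fact n) sums exp y"
    using exp_converges[of y] by (simp add: divide_inverse mult.commute scaleR_conv_of_real)
  have "sum (\<lambda>n. y ^ n / fact n) {r} \<le> (\<Sum>n. y ^ n / fact n)"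
    by (rule sum_le_suminf) (use s assms in \<open>auto simp: sums_iff\<close>)
  then show ?thesis
    using s by (simp add: sums_iff)
qed

text \<open>This is what
  makes the Poisson moments below explicitly computable.\<close>

lemma power_le_fact_geometric:
  fixes lam :: real and k r :: nat
  assumes lam: "lam \<ge> 0"
  shows "(1 + real k) ^ r \<le> fact r * (lam + 2) ^ r * (1 + 1 / (lam + 1)) ^ (k + 1)"
proof -
  define c where "c = 1 + 1 / (lam + 1)"
  define t where "t = ln c"
  have c1: "c > 1"
    using lam by (simp add: c_def)
  have "ln (1 / c) \<le> 1 / c - 1"
    using c1 by (intro ln_le_minus_one) simp
  then have "t \<ge> 1 - 1 / c"
    using c1 by (simp add: t_def ln_div)
  also have "1 - 1 / c = 1 / (lam + 2)"
    using lam by (simp add: c_def field_simps)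
  finally have t_ge: "t \<ge> 1 / (lam + 2)" .
  then have t_scaled: "1 \<le> t * (lam + 2)"
    using lam by (simp add: field_simps)
  have "0 < 1 / (lam + 2)"
    using lam by simp
  then have "t \<ge> 0"
    using t_ge by linarith
  then have "(real (k + 1) * t) ^ r / fact r \<le> exp (real (k + 1) * t)"
    by (intro power_div_fact_le_exp) simp
  also have "exp (real (k + 1) * t) = c ^ (k + 1)"
    using c1 unfolding t_def by (subst exp_of_nat_mult) simp
  finally have "(real (k + 1) * t) ^ r \<le> fact r * c ^ (k + 1)"
    by (simp add: field_simps)
  then have "(1 + real k) ^ r * t ^ r \<le> fact r * c ^ (k + 1)"
    by (simp add: power_mult_distrib add.commute)
  from mult_right_mono[OF this, of "(lam + 2) ^ r"]
  have "(1 + real k) ^ r * (t * (lam + 2)) ^ r \<le> fact r * c ^ (k + 1) * (lam + 2) ^ r"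
    using lam by (simp add: power_mult_distrib mult_ac)
  moreover have "(1 + real k) ^ r * 1 \<le> (1 + real k) ^ r * (t * (lam + 2)) ^ r"
    using t_scaled by (intro mult_left_mono one_le_power) auto
  ultimately have "(1 + real k) ^ r \<le> fact r * c ^ (k + 1) * (lam + 2) ^ r"
    by linarith
  then show ?thesis
    by (simp add: c_def mult_ac)
qed

lemma mult_le_sum_squares: "(a::real) * b \<le> a\<^sup>2 + b\<^sup>2"
proof (cases "a * b \<ge> 0")
  case True
  then show ?thesis
    using sum_squares_bound[of a b] by linarith
next
  case False
  then show ?thesis
    using zero_le_power2[of a] zero_le_power2[of b] by linarith
qed

text \<open>The inequality used to get rid of a random index: \<open>a \<le> a\<^sup>2/w + w\<close>.\<close>

lemma le_square_div_plus:
  assumes "(w::real) > 0"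
  shows "a \<le> a\<^sup>2 / w + w"
proof -
  have "a * w \<le> a\<^sup>2 + w\<^sup>2"
    by (rule mult_le_sum_squares)
  then show ?thesis
    using assms by (simp add: field_simps power2_eq_square)
qed

text \<open>The proof integrates the
  geometric majorant of \<open>power_le_fact_geometric\<close> against the Poisson weights.\<close>

lemma poisson_moment_bound:
  assumes P: "prob_space M"
    and Y: "Y \<in> measurable M (count_space UNIV)"
    and lam: "lam \<ge> 0"
    and distr: "\<And>k. measure M {\<omega>\<in>space M. Y \<omega> = k} = lam ^ k / fact k * exp (- lam)"
  shows "(\<integral>\<^sup>+\<omega>. ennreal ((1 + real (Y \<omega>)) ^ r) \<partial>M) \<le> ennreal (2 * exp 1 * fact r * (lam + 2) ^ r)"
proof -
  define c where "c = 1 + 1 / (lam + 1)"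
  define F where "F = fact r * (lam + 2) ^ r"
  define A where "A k = {\<omega>\<in>space M. Y \<omega> = k}" for k
  have F_nonneg: "F \<ge> 0"
    using lam by (simp add: F_def)
  have c_bounds: "1 \<le> c" "c \<le> 2"
    using lam by (auto simp: c_def field_simps)
  have A_sets: "A k \<in> sets M" for k
    unfolding A_def using Y by measurable
  have A_disj: "disjoint_family A"
    by (auto simp: disjoint_family_on_def A_def)
  have series: "(\<lambda>k. F * c ^ (k + 1) * (lam ^ k / fact k * exp (- lam)))
      sums (F * c * exp (- lam) * exp (c * lam))"
  proof -
    have "(\<lambda>n. (c * lam) ^ n / fact n) sums exp (c * lam)"
      using exp_converges[of "c * lam"] by (simp add: divide_inverse mult.commute scaleR_conv_of_real)
    from sums_mult[OF this, of "F * c * exp (- lam)"] show ?thesis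
      by (simp add: power_mult_distrib field_simps)
  qed
  have "(\<integral>\<^sup>+\<omega>. ennreal ((1 + real (Y \<omega>)) ^ r) \<partial>M) \<le> (\<integral>\<^sup>+\<omega>. ennreal (F * c ^ (Y \<omega> + 1)) \<partial>M)"
    by (intro nn_integral_mono ennreal_leI)
      (use power_le_fact_geometric[OF lam] in \<open>simp add: F_def c_def\<close>)
  also have "\<dots> = (\<integral>\<^sup>+\<omega>. (\<Sum>k. ennreal (F * c ^ (k + 1)) * indicator (A k) \<omega>) \<partial>M)"
    by (intro nn_integral_cong suminf_cmult_indicator[symmetric, OF A_disj]) (auto simp: A_def)
  also have "\<dots> = (\<Sum>k. ennreal (F * c ^ (k + 1)) * emeasure M (A k))"
    by (subst nn_integral_suminf) (use A_sets in \<open>auto simp: nn_integral_cmult_indicator\<close>)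
  also have "\<dots> = (\<Sum>k. ennreal (F * c ^ (k + 1) * (lam ^ k / fact k * exp (- lam))))"
    using finite_measure.emeasure_eq_measure[OF prob_space.finite_measure[OF P]]
      distr c_bounds F_nonneg lam
    by (simp add: A_def ennreal_mult'[symmetric])
  also have "\<dots> = ennreal (F * c * exp (- lam) * exp (c * lam))"
    by (subst suminf_ennreal2) (use series c_bounds F_nonneg lam in \<open>auto simp: sums_iff\<close>)
  also have "\<dots> \<le> ennreal (2 * exp 1 * fact r * (lam + 2) ^ r)"
  proof (intro ennreal_leI)
    have "exp (- lam) * exp (c * lam) = exp (lam / (lam + 1))"
      using lam by (simp add: c_def field_simps flip: exp_add)
    also have "\<dots> \<le> exp 1"
      using lam by simp
    finally have "c * (exp (- lam) * exp (c * lam)) \<le> 2 * exp 1"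
      using c_bounds by (intro mult_mono) auto
    from mult_left_mono[OF this F_nonneg]
    show "F * c * exp (- lam) * exp (c * lam) \<le> 2 * exp 1 * fact r * (lam + 2) ^ r"
      by (simp add: F_def mult_ac)
  qed
  finally show ?thesis .
qed

text \<open>Cancelling a common factor, stated so that it can be used by rewriting only.\<close>

lemma mult_div_cancel_factor: "(a::real) \<noteq> 0 \<Longrightarrow> c * a * (1 / (a * b)) = c * inverse b"
  by (simp add: divide_inverse)

text \<open>Let \<open>Y\<^sub>j\<close> be random variables whose second
  moments grow at most like \<open>(j+1)^m\<close>, and let \<open>\<nu>\<close> be a random index with
  \<open>E (\<nu>+1)^(m+2) < \<infinity>\<close>.  Then \<open>Y\<^sub>\<nu>\<close> has finite expectation: with \<open>w = (\<nu>+1)^(m+2)\<close>,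
  \<open>Y\<^sub>\<nu> \<le> Y\<^sub>\<nu>\<^sup>2/w + w\<close>, and \<open>Y\<^sub>\<nu>\<^sup>2/w\<close> is dominated by \<open>\<Sum>\<^sub>j Y\<^sub>j\<^sup>2/(j+1)^(m+2)\<close>, whose
  expectation is at most \<open>\<Sum>\<^sub>j C/(j+1)\<^sup>2\<close>.\<close>

lemma nn_integral_random_index_finite:
  fixes Y :: "nat \<Rightarrow> 'a \<Rightarrow> real" and \<nu> :: "'a \<Rightarrow> nat"
  assumes Y_meas: "\<And>j. Y j \<in> borel_measurable M"
    and C: "C \<ge> 0"
    and second_moment: "\<And>j. (\<integral>\<^sup>+\<omega>. ennreal (Y j \<omega> ^ 2) \<partial>M) \<le> ennreal (C * real (j + 1) ^ m)"
    and \<nu>_meas: "\<nu> \<in> measurable M (count_space UNIV)"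
    and \<nu>_moment: "(\<integral>\<^sup>+\<omega>. ennreal (real (\<nu> \<omega> + 1) ^ (m + 2)) \<partial>M) < \<infinity>"
  shows "(\<integral>\<^sup>+\<omega>. ennreal (Y (\<nu> \<omega>) \<omega>) \<partial>M) < \<infinity>"
proof -
  define q where "q = m + 2"
  define G where "G \<omega> = (\<Sum>j. ennreal (Y j \<omega> ^ 2 / real (j + 1) ^ q))" for \<omega>
  have G_meas: "G \<in> borel_measurable M"
    unfolding G_def using Y_meas by measurable
  have pointwise: "ennreal (Y (\<nu> \<omega>) \<omega>) \<le> G \<omega> + ennreal (real (\<nu> \<omega> + 1) ^ q)" for \<omega>
  proof -
    define j where "j = \<nu> \<omega>"
    define w where "w = real (j + 1) ^ q"
    have tail: "ennreal (Y j \<omega> ^ 2 / w) \<le> G \<omega>"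
    proof -
      have "ennreal (Y j \<omega> ^ 2 / w) = (\<Sum>i\<in>{j}. ennreal (Y i \<omega> ^ 2 / real (i + 1) ^ q))"
        by (simp add: w_def)
      also have "\<dots> \<le> G \<omega>"
        unfolding G_def by (rule sum_le_suminf) auto
      finally show ?thesis .
    qed
    have "ennreal (Y j \<omega>) \<le> ennreal (Y j \<omega> ^ 2 / w + w)"
      unfolding w_def by (intro ennreal_leI le_square_div_plus) simp
    also have "\<dots> = ennreal (Y j \<omega> ^ 2 / w) + ennreal w"
      unfolding w_def by (intro ennreal_plus divide_nonneg_nonneg zero_le_power2 zero_le_power of_nat_0_le_iff)
    also have "\<dots> \<le> G \<omega> + ennreal w"
      using tail by (rule add_right_mono)
    finally show ?thesis
      unfolding j_def w_def .
  qed
  have term_bound: "(\<integral>\<^sup>+\<omega>. ennreal (Y j \<omega> ^ 2 / real (j + 1) ^ q) \<partial>M)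
      \<le> ennreal (C * inverse (real (Suc j) ^ 2))" for j
  proof -
    have "(\<integral>\<^sup>+\<omega>. ennreal (Y j \<omega> ^ 2 / real (j + 1) ^ q) \<partial>M)
        = (\<integral>\<^sup>+\<omega>. ennreal (Y j \<omega> ^ 2) * ennreal (1 / real (j + 1) ^ q) \<partial>M)"
      by (intro nn_integral_cong) (simp add: ennreal_mult'[symmetric] divide_inverse)
    also have "\<dots> = (\<integral>\<^sup>+\<omega>. ennreal (Y j \<omega> ^ 2) \<partial>M) * ennreal (1 / real (j + 1) ^ q)"
      by (rule nn_integral_multc) (use Y_meas[of j] in measurable)
    also have "\<dots> \<le> ennreal (C * real (j + 1) ^ m) * ennreal (1 / real (j + 1) ^ q)"
      by (intro mult_right_mono second_moment) auto
    also have "\<dots> = ennreal (C * real (j + 1) ^ m * (1 / real (j + 1) ^ q))"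
      using C by (intro ennreal_mult'[symmetric]) simp
    also have "\<dots> = ennreal (C * inverse (real (Suc j) ^ 2))"
    proof -
      have q_split: "real (j + 1) ^ q = real (j + 1) ^ m * real (Suc j) ^ 2"
        by (simp add: q_def power_add power2_eq_square)
      have nonzero: "real (j + 1) ^ m \<noteq> 0"
        by simp
      show ?thesis
        by (simp only: q_split mult_div_cancel_factor[OF nonzero])
    qed
    finally show ?thesis .
  qed
  have summable: "summable (\<lambda>j. C * inverse (real (Suc j) ^ 2))"
    by (intro summable_mult) (subst summable_Suc_iff, rule inverse_power_summable, simp)
  have "(\<integral>\<^sup>+\<omega>. G \<omega> \<partial>M) = (\<Sum>j. \<integral>\<^sup>+\<omega>. ennreal (Y j \<omega> ^ 2 / real (j + 1) ^ q) \<partial>M)"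
    unfolding G_def by (rule nn_integral_suminf) (use Y_meas in measurable)
  also have "\<dots> \<le> (\<Sum>j. ennreal (C * inverse (real (Suc j) ^ 2)))"
    by (intro suminf_le term_bound) auto
  also have "\<dots> = ennreal (\<Sum>j. C * inverse (real (Suc j) ^ 2))"
    by (rule suminf_ennreal2) (use C summable in auto)
  finally have G_finite: "(\<integral>\<^sup>+\<omega>. G \<omega> \<partial>M) < \<infinity>"
    using order.strict_trans1 by fastforce
  have "(\<integral>\<^sup>+\<omega>. ennreal (Y (\<nu> \<omega>) \<omega>) \<partial>M) \<le> (\<integral>\<^sup>+\<omega>. G \<omega> + ennreal (real (\<nu> \<omega> + 1) ^ q) \<partial>M)"
    by (intro nn_integral_mono pointwise)
  also have "\<dots> = (\<integral>\<^sup>+\<omega>. G \<omega> \<partial>M) + (\<integral>\<^sup>+\<omega>. ennreal (real (\<nu> \<omega> + 1) ^ q) \<partial>M)"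
    using G_meas \<nu>_meas by (simp add: nn_integral_add)
  also have "\<dots> < \<infinity>"
    using G_finite \<nu>_moment by (simp add: q_def less_top)
  finally show ?thesis .
qed

lemma nn_integral_finite_if_dominated:
  assumes "integrable M f" "\<And>\<omega>. \<omega> \<in> space M \<Longrightarrow> 0 \<le> g \<omega> \<and> g \<omega> \<le> f \<omega>"
  shows "(\<integral>\<^sup>+\<omega>. ennreal (g \<omega>) \<partial>M) < \<infinity>"
proof -
  have "(\<integral>\<^sup>+\<omega>. ennreal (g \<omega>) \<partial>M) \<le> (\<integral>\<^sup>+\<omega>. ennreal (norm (f \<omega>)) \<partial>M)"
    using assms(2) by (intro nn_integral_mono ennreal_leI) force
  also have "\<dots> < \<infinity>"
    using assms(1) by (simp add: integrable_iff_bounded)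
  finally show ?thesis .
qed

lemma (in finite_measure) ceiling_moment_finite:
  fixes S :: "'a \<Rightarrow> real"
  assumes S_nonneg: "\<And>\<omega>. \<omega> \<in> space M \<Longrightarrow> S \<omega> \<ge> 0"
    and S_moment: "integrable M (\<lambda>\<omega>. S \<omega> ^ q)"
  shows "(\<integral>\<^sup>+\<omega>. ennreal (real (nat \<lceil>S \<omega>\<rceil> + 1) ^ q) \<partial>M) < \<infinity>"
proof (rule nn_integral_finite_if_dominated)
  show "integrable M (\<lambda>\<omega>. (4::real) ^ q * (S \<omega> ^ q + 1))"
    using S_moment by auto
  fix \<omega> assume "\<omega> \<in> space M"
  then have s: "S \<omega> \<ge> 0"
    by (rule S_nonneg)
  have index_le: "real (nat \<lceil>S \<omega>\<rceil> + 1) \<le> S \<omega> + 2"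
    using s by linarith
  have "real (nat \<lceil>S \<omega>\<rceil> + 1) ^ q \<le> 4 ^ q * (S \<omega> ^ q + 1)"
  proof (cases "S \<omega> \<le> 1")
    case True
    then have "real (nat \<lceil>S \<omega>\<rceil> + 1) ^ q \<le> 4 ^ q"
      using index_le by (intro power_mono) auto
    then show ?thesis
      using s by (simp add: add_increasing2 mult_le_cancel_left1 order_trans)
  next
    case False
    then have "real (nat \<lceil>S \<omega>\<rceil> + 1) ^ q \<le> (4 * S \<omega>) ^ q"
      using index_le by (intro power_mono) auto
    also have "\<dots> \<le> 4 ^ q * (S \<omega> ^ q + 1)"
      by (simp add: power_mult_distrib distrib_left)
    finally show ?thesis .
  qed
  then show "0 \<le> real (nat \<lceil>S \<omega>\<rceil> + 1) ^ q \<and> real (nat \<lceil>S \<omega>\<rceil> + 1) ^ q \<le> 4 ^ q * (S \<omega> ^ q + 1)"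
    by simp
qed

lemma poisson_pp_prob_space: "poisson_pp M N \<Longrightarrow> prob_space M"
  by (simp add: poisson_pp_def)

lemma poisson_pp_locally_finite:
  "poisson_pp M N \<Longrightarrow> \<omega> \<in> space M \<Longrightarrow> bounded B \<Longrightarrow> finite (N \<omega> \<inter> B)"
  by (simp add: poisson_pp_def)

lemma poisson_pp_count_measurable:
  "poisson_pp M N \<Longrightarrow> B \<in> sets lborel \<Longrightarrow> bounded B \<Longrightarrow>
     pcount N B \<in> measurable M (count_space UNIV)"
  by (simp add: poisson_pp_def)

lemma poisson_pp_count_distribution:
  "poisson_pp M N \<Longrightarrow> B \<in> sets lborel \<Longrightarrow> bounded B \<Longrightarrow>
     measure M {\<omega> \<in> space M. pcount N B \<omega> = k}
       = measure lborel B ^ k / fact k * exp (- measure lborel B)"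
  by (simp add: poisson_pp_def)

lemma cities_locally_finite:
  assumes "poisson_pp M N" "\<omega> \<in> space M" "bounded B"
  shows "finite (cities N \<omega> \<inter> B)"
proof -
  have "cities N \<omega> \<inter> B \<subseteq> insert 0 (N \<omega> \<inter> B)"
    by (auto simp: cities_def)
  then show ?thesis
    using poisson_pp_locally_finite[OF assms] finite_subset by blast
qed

text \<open>The number of points in the disc of radius \<open>j\<close> has moments growing polynomially
  in \<open>j\<close>: its mean is \<open>\<pi> j\<^sup>2 \<le> (\<pi> + 2)(j+1)\<^sup>2 - 2\<close>.\<close>

lemma ball_count_moment:
  assumes pp: "poisson_pp M N"
  shows "(\<integral>\<^sup>+\<omega>. ennreal ((1 + real (pcount N (cball 0 (real j)) \<omega>)) ^ r) \<partial>M)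
           \<le> ennreal (2 * exp 1 * fact r * (unit_ball_vol 2 + 2) ^ r * real (j + 1) ^ (2 * r))"
proof -
  define lam where "lam = measure lborel (cball (0::real^2) (real j))"
  have lam: "lam = unit_ball_vol 2 * real j ^ 2"
    by (simp add: lam_def measure_def emeasure_cball)
  have lam_nonneg: "lam \<ge> 0"
    by (simp add: lam_def)
  have count_meas: "pcount N (cball 0 (real j)) \<in> measurable M (count_space UNIV)"
    by (rule poisson_pp_count_measurable[OF pp]) auto
  have count_distr: "measure M {\<omega> \<in> space M. pcount N (cball 0 (real j)) \<omega> = k}
      = lam ^ k / fact k * exp (- lam)" for k
    unfolding lam_def by (rule poisson_pp_count_distribution[OF pp]) auto
  have "(\<integral>\<^sup>+\<omega>. ennreal ((1 + real (pcount N (cball 0 (real j)) \<omega>)) ^ r) \<partial>M)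
      \<le> ennreal (2 * exp 1 * fact r * (lam + 2) ^ r)"
    using poisson_pp_prob_space[OF pp] count_meas lam_nonneg count_distr
    by (rule poisson_moment_bound)
  also have "\<dots> \<le> ennreal (2 * exp 1 * fact r * (unit_ball_vol 2 + 2) ^ r * real (j + 1) ^ (2 * r))"
  proof (intro ennreal_leI)
    have "lam + 2 \<le> (unit_ball_vol 2 + 2) * real (j + 1) ^ 2"
      unfolding lam by (simp add: algebra_simps power2_eq_square)
    then have "(lam + 2) ^ r \<le> ((unit_ball_vol 2 + 2) * real (j + 1) ^ 2) ^ r"
      using lam_nonneg by (intro power_mono) auto
    then show "2 * exp 1 * fact r * (lam + 2) ^ r
        \<le> 2 * exp 1 * fact r * (unit_ball_vol 2 + 2) ^ r * real (j + 1) ^ (2 * r)"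
      by (simp add: power_mult_distrib power_mult mult.assoc)
  qed
  finally show ?thesis .
qed

text \<open>The number of cities in a bounded Borel set is a random variable: it is the
  number of process points, plus one if the set contains the origin and the process
  does not.\<close>

lemma cities_count_measurable:
  assumes pp: "poisson_pp M N" and A: "A \<in> sets lborel" "bounded A"
  shows "(\<lambda>\<omega>. real (card (cities N \<omega> \<inter> A))) \<in> borel_measurable M"
proof -
  have count_A: "pcount N A \<in> measurable M (count_space UNIV)"
    using poisson_pp_count_measurable[OF pp A] .
  have count_0: "pcount N {0} \<in> measurable M (count_space UNIV)"
    using poisson_pp_count_measurable[OF pp] by simp
  have eq: "real (card (cities N \<omega> \<inter> A)) =
      real (pcount N A \<omega>) + (if 0 \<in> A \<and> pcount N {0} \<omega> = 0 then 1 else 0)"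
    if \<omega>: "\<omega> \<in> space M" for \<omega>
  proof -
    have fin_A: "finite (N \<omega> \<inter> A)"
      using poisson_pp_locally_finite[OF pp \<omega> A(2)] .
    have "finite (N \<omega> \<inter> {0})"
      using poisson_pp_locally_finite[OF pp \<omega>, of "{0}"] by simp
    then have origin: "pcount N {0} \<omega> = 0 \<longleftrightarrow> 0 \<notin> N \<omega>"
      by (auto simp: pcount_def)
    show ?thesis
    proof (cases "0 \<in> A")
      case True
      then have "cities N \<omega> \<inter> A = insert 0 (N \<omega> \<inter> A)"
        by (auto simp: cities_def)
      then show ?thesis
        using fin_A True origin by (auto simp: pcount_def insert_absorb)
    next
      case False
      then have "cities N \<omega> \<inter> A = N \<omega> \<inter> A"
        by (auto simp: cities_def)
      then show ?thesis
        using False by (simp add: pcount_def)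
    qed
  qed
  have "(\<lambda>\<omega>. real (pcount N A \<omega>) + (if 0 \<in> A \<and> pcount N {0} \<omega> = 0 then 1 else 0))
      \<in> borel_measurable M"
    using count_A count_0 by measurable
  then show ?thesis
    using eq by (subst measurable_cong) auto
qed

lemma sum_by_fibres:
  fixes h :: "'b \<Rightarrow> real"
  assumes "finite C" "finite I" "g ` C \<subseteq> I"
  shows "(\<Sum>x\<in>C. h (g x)) = (\<Sum>a\<in>I. real (card {x\<in>C. g x = a}) * h a)"
proof -
  have "(\<Sum>x\<in>C. h (g x)) = (\<Sum>a\<in>I. \<Sum>x\<in>{x\<in>C. g x = a}. h (g x))"
    using sum.group[OF assms, of "\<lambda>x. h (g x)"] by simp
  also have "\<dots> = (\<Sum>a\<in>I. real (card {x\<in>C. g x = a}) * h a)"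
    by (intro sum.cong refl) simp
  finally show ?thesis .
qed

lemma double_sum_by_fibres:
  fixes F :: "'b \<Rightarrow> 'b \<Rightarrow> real"
  assumes "finite C" "finite I" "g ` C \<subseteq> I"
  shows "(\<Sum>x\<in>C. \<Sum>y\<in>C. F (g x) (g y)) =
     (\<Sum>a\<in>I. \<Sum>b\<in>I. real (card {x\<in>C. g x = a}) * real (card {x\<in>C. g x = b}) * F a b)"
proof -
  have "(\<Sum>x\<in>C. \<Sum>y\<in>C. F (g x) (g y))
      = (\<Sum>x\<in>C. \<Sum>b\<in>I. real (card {x\<in>C. g x = b}) * F (g x) b)"
    by (intro sum.cong refl sum_by_fibres[OF assms])
  also have "\<dots> = (\<Sum>b\<in>I. \<Sum>x\<in>C. real (card {x\<in>C. g x = b}) * F (g x) b)"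
    by (rule sum.swap)
  also have "\<dots> = (\<Sum>b\<in>I. \<Sum>a\<in>I. real (card {x\<in>C. g x = a}) * (real (card {x\<in>C. g x = b}) * F a b))"
    by (intro sum.cong refl) (subst sum_by_fibres[OF assms, symmetric], simp add: mult_ac)
  also have "\<dots> = (\<Sum>a\<in>I. \<Sum>b\<in>I. real (card {x\<in>C. g x = a}) * real (card {x\<in>C. g x = b}) * F a b)"
    by (subst sum.swap) (simp add: mult_ac)
  finally show ?thesis .
qed

lemma dyadic_floor_tendsto: "(\<lambda>n. real_of_int \<lfloor>2 ^ n * t\<rfloor> / 2 ^ n) \<longlonglongrightarrow> (t::real)"
proof (rule tendsto_sandwich[of "\<lambda>n. t - (1/2) ^ n" _ _ "\<lambda>n. t"])
  show "\<forall>\<^sub>F n in sequentially. t - (1/2) ^ n \<le> real_of_int \<lfloor>2 ^ n * t\<rfloor> / 2 ^ n"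
  proof (intro always_eventually allI)
    fix n :: nat
    have "2 ^ n * t - 1 \<le> real_of_int \<lfloor>2 ^ n * t\<rfloor>"
      by linarith
    then have "(2 ^ n * t - 1) / 2 ^ n \<le> real_of_int \<lfloor>2 ^ n * t\<rfloor> / 2 ^ n"
      by (intro divide_right_mono) auto
    then show "t - (1/2) ^ n \<le> real_of_int \<lfloor>2 ^ n * t\<rfloor> / 2 ^ n"
      by (simp add: field_simps power_one_over)
  qed
  show "\<forall>\<^sub>F n in sequentially. real_of_int \<lfloor>2 ^ n * t\<rfloor> / 2 ^ n \<le> t"
    by (intro always_eventually allI) (simp add: field_simps)
  show "(\<lambda>n. t - (1/2) ^ n) \<longlonglongrightarrow> t"
    using tendsto_diff[OF tendsto_const LIMSEQ_realpow_zero[of "1/2::real"]] by simp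
qed simp

lemma dyadic_ceiling_approx:
  fixes s :: real
  defines "u \<equiv> \<lambda>n. (real_of_int \<lfloor>2 ^ n * s\<rfloor> + 1) / 2 ^ n"
  shows "s < u n" and "u n \<le> s + 1" and "u \<longlonglongrightarrow> s"
proof -
  have u_eq: "u n = real_of_int \<lfloor>2 ^ n * s\<rfloor> / 2 ^ n + (1/2) ^ n" for n
    by (simp add: u_def add_divide_distrib power_one_over)
  have "2 ^ n * s < real_of_int \<lfloor>2 ^ n * s\<rfloor> + 1"
    by linarith
  then show "s < u n"
    by (simp add: u_def field_simps)
  have "real_of_int \<lfloor>2 ^ n * s\<rfloor> / 2 ^ n \<le> s" "(1/2::real) ^ n \<le> 1"
    by (simp_all add: field_simps power_le_one)
  then show "u n \<le> s + 1"
    unfolding u_eq by linarith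
  show "u \<longlonglongrightarrow> s"
    unfolding u_eq using tendsto_add[OF dyadic_floor_tendsto LIMSEQ_realpow_zero[of "1/2::real"]]
    by simp
qed

definition grid_cell :: "nat \<Rightarrow> real^2 \<Rightarrow> int \<times> int" where
  "grid_cell n x = (\<lfloor>2 ^ n * x$1\<rfloor>, \<lfloor>2 ^ n * x$2\<rfloor>)"

definition grid_corner :: "nat \<Rightarrow> int \<times> int \<Rightarrow> real^2" where
  "grid_corner n a =
     (\<chi> i. if i = 1 then real_of_int (fst a) / 2 ^ n else real_of_int (snd a) / 2 ^ n)"

lemma grid_corner_tendsto: "(\<lambda>n. grid_corner n (grid_cell n x)) \<longlonglongrightarrow> x"
proof -
  have "grid_corner n (grid_cell n x) = (\<chi> i. real_of_int \<lfloor>2 ^ n * x$i\<rfloor> / 2 ^ n)" for n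
    unfolding grid_corner_def grid_cell_def vec_eq_iff using exhaust_2 by force
  then show ?thesis
    by (simp only:) (rule vec_tendstoI, simp add: dyadic_floor_tendsto)
qed

lemma grid_cell_sets: "{x. grid_cell n x = a} \<in> sets lborel"
proof -
  have "{x. grid_cell n x = a} = {x::real^2. \<lfloor>2 ^ n * x$1\<rfloor> = fst a \<and> \<lfloor>2 ^ n * x$2\<rfloor> = snd a}"
    by (cases a) (auto simp: grid_cell_def)
  also have "\<dots> \<in> sets borel"
    by measurable
  finally show ?thesis
    by simp
qed

lemma grid_cell_bounded:
  assumes "norm x \<le> r"
  shows "grid_cell n x \<in> {-\<lceil>2 ^ n * r\<rceil>..\<lceil>2 ^ n * r\<rceil>} \<times> {-\<lceil>2 ^ n * r\<rceil>..\<lceil>2 ^ n * r\<rceil>}"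
proof -
  have coord: "-\<lceil>2 ^ n * r\<rceil> \<le> \<lfloor>2 ^ n * x$i\<rfloor> \<and> \<lfloor>2 ^ n * x$i\<rfloor> \<le> \<lceil>2 ^ n * r\<rceil>" for i
  proof -
    have "\<bar>x$i\<bar> \<le> r"
      using component_le_norm_cart[of x i] assms by linarith
    then have "2 ^ n * (-r) \<le> 2 ^ n * x$i" "2 ^ n * x$i \<le> 2 ^ n * r"
      by (intro mult_left_mono; simp add: abs_le_iff)+
    then show ?thesis
      by linarith
  qed
  show ?thesis
    using coord[of 1] coord[of 2] by (simp add: grid_cell_def)
qed

text \<open>For a fixed radius, \<open>D(r)\<close> is a random variable: it is the limit of the sums
  obtained by moving every city to the corner of its grid cell, and each of these is
  a finite combination of cell counts.\<close>

lemma pair_dist_sum_measurable: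
  assumes pp: "poisson_pp M N"
  shows "(\<lambda>\<omega>. pair_dist_sum N r \<omega>) \<in> borel_measurable M"
proof (rule borel_measurable_LIMSEQ_real)
  define C where "C \<omega> = cities N \<omega> \<inter> cball 0 r" for \<omega>
  define D\<^sub>n where "D\<^sub>n n \<omega> = (\<Sum>x\<in>C \<omega>. \<Sum>y\<in>C \<omega>.
      dist (grid_corner n (grid_cell n x)) (grid_corner n (grid_cell n y))) / 2" for n \<omega>
  show "(\<lambda>n. D\<^sub>n n \<omega>) \<longlonglongrightarrow> pair_dist_sum N r \<omega>" for \<omega>
    unfolding D\<^sub>n_def pair_dist_sum_def Let_def C_def
    by (intro tendsto_intros grid_corner_tendsto) simp
  show "D\<^sub>n n \<in> borel_measurable M" for n
  proof -
    define K where "K = \<lceil>2 ^ n * r\<rceil>"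
    define I where "I = {-K..K} \<times> {-K..K}"
    define cnt where
      "cnt a \<omega> = real (card (cities N \<omega> \<inter> (cball 0 r \<inter> {x. grid_cell n x = a})))" for a \<omega>
    have eq: "D\<^sub>n n \<omega> = (\<Sum>a\<in>I. \<Sum>b\<in>I. cnt a \<omega> * cnt b \<omega> *
        dist (grid_corner n a) (grid_corner n b)) / 2"
      if \<omega>: "\<omega> \<in> space M" for \<omega>
    proof -
      have "finite (C \<omega>)"
        unfolding C_def by (rule cities_locally_finite[OF pp \<omega>]) simp
      moreover have "grid_cell n ` C \<omega> \<subseteq> I"
        using grid_cell_bounded by (force simp: C_def I_def K_def)
      moreover have "{x \<in> C \<omega>. grid_cell n x = a}
          = cities N \<omega> \<inter> (cball 0 r \<inter> {x. grid_cell n x = a})" for a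
        by (auto simp: C_def)
      ultimately show ?thesis
        unfolding D\<^sub>n_def by (subst double_sum_by_fibres) (auto simp: I_def cnt_def)
    qed
    have "cnt a \<in> borel_measurable M" for a
      unfolding cnt_def
    proof (rule cities_count_measurable[OF pp])
      show "cball 0 r \<inter> {x. grid_cell n x = a} \<in> sets lborel"
        using grid_cell_sets[of n a] by auto
    qed (auto intro: bounded_subset[OF bounded_cball])
    then have "(\<lambda>\<omega>. (\<Sum>a\<in>I. \<Sum>b\<in>I. cnt a \<omega> * cnt b \<omega> *
        dist (grid_corner n a) (grid_corner n b)) / 2) \<in> borel_measurable M"
      by measurable
    then show ?thesis
      using eq by (subst measurable_cong) auto
  qed
qed

text \<open>As the radius decreases to \<open>s\<close>, \<open>D\<close> is eventually constant, since only finitely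
  many cities lie near the disc of radius \<open>s\<close>.\<close>

lemma pair_dist_sum_right_limit:
  assumes pp: "poisson_pp M N" and \<omega>: "\<omega> \<in> space M"
    and lim: "(r \<longlongrightarrow> s) F" and above: "\<forall>\<^sub>F n in F. s \<le> r n"
  shows "\<forall>\<^sub>F n in F. pair_dist_sum N (r n) \<omega> = pair_dist_sum N s \<omega>"
proof -
  define C where "C = cities N \<omega> \<inter> cball 0 (s + 1)"
  have "finite C"
    unfolding C_def by (rule cities_locally_finite[OF pp \<omega>]) simp
  have below: "\<forall>\<^sub>F n in F. r n < s + 1"
    using order_tendstoD(2)[OF lim] by simp
  have not_outside: "\<forall>\<^sub>F n in F. \<forall>x\<in>C. norm x \<le> r n \<longrightarrow> norm x \<le> s"
  proof (rule eventually_ball_finite[OF \<open>finite C\<close>], rule ballI)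
    fix x
    show "\<forall>\<^sub>F n in F. norm x \<le> r n \<longrightarrow> norm x \<le> s"
    proof (cases "norm x \<le> s")
      case False
      then have "\<forall>\<^sub>F n in F. r n < norm x"
        using order_tendstoD(2)[OF lim] by simp
      then show ?thesis
        by eventually_elim auto
    qed simp
  qed
  from above below not_outside show ?thesis
  proof eventually_elim
    case (elim n)
    then have "cities N \<omega> \<inter> cball 0 (r n) = cities N \<omega> \<inter> cball 0 s"
      by (force simp: C_def)
    then show ?case
      by (simp add: pair_dist_sum_def)
  qed
qed

text \<open>For a random radius \<open>S\<close>, \<open>D(S)\<close> is a random variable: round \<open>S\<close> up to the
  dyadic grid, where it takes countably many values.\<close>

lemma pair_dist_sum_random_radius_measurable:
  assumes pp: "poisson_pp M N" and S: "S \<in> borel_measurable M"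
  shows "(\<lambda>\<omega>. pair_dist_sum N (S \<omega>) \<omega>) \<in> borel_measurable M"
proof (rule borel_measurable_LIMSEQ_real)
  define u where "u n \<omega> = (real_of_int \<lfloor>2 ^ n * S \<omega>\<rfloor> + 1) / 2 ^ n" for n \<omega>
  show "(\<lambda>\<omega>. pair_dist_sum N (u n \<omega>) \<omega>) \<in> borel_measurable M" for n
  proof -
    have "(\<lambda>\<omega>. \<lfloor>2 ^ n * S \<omega>\<rfloor>) \<in> measurable M (count_space UNIV)"
      using S by measurable
    from measurable_compose_countable[OF _ this,
        of "\<lambda>i \<omega>. pair_dist_sum N ((real_of_int i + 1) / 2 ^ n) \<omega>"]
    show ?thesis
      by (simp add: u_def pair_dist_sum_measurable[OF pp])
  qed
  show "(\<lambda>n. pair_dist_sum N (u n \<omega>) \<omega>) \<longlonglongrightarrow> pair_dist_sum N (S \<omega>) \<omega>"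
    if \<omega>: "\<omega> \<in> space M" for \<omega>
  proof (rule tendsto_eventually, rule pair_dist_sum_right_limit[OF pp \<omega>])
    show "(\<lambda>n. u n \<omega>) \<longlonglongrightarrow> S \<omega>"
      using dyadic_ceiling_approx(3)[where s = "S \<omega>"] by (simp add: u_def)
    show "\<forall>\<^sub>F n in sequentially. S \<omega> \<le> u n \<omega>"
      using dyadic_ceiling_approx(1)[where s = "S \<omega>"] by (simp add: u_def less_imp_le)
  qed
qed

text \<open>The pointwise bound: the cities in the disc of radius \<open>s\<close> are the origin and
  at most the process points in the disc of radius \<open>\<lceil>s\<rceil>\<close>, and any two of them are at
  distance at most \<open>2s\<close>.\<close>

lemma pair_dist_sum_nonneg: "pair_dist_sum N s \<omega> \<ge> 0"
  by (simp add: pair_dist_sum_def Let_def sum_nonneg)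

lemma pair_dist_sum_le:
  assumes pp: "poisson_pp M N" and \<omega>: "\<omega> \<in> space M" and s: "s \<ge> 0"
  shows "pair_dist_sum N s \<omega> \<le> s * (1 + real (pcount N (cball 0 (real (nat \<lceil>s\<rceil>))) \<omega>)) ^ 2"
proof -
  define C where "C = cities N \<omega> \<inter> cball 0 s"
  define B where "B = N \<omega> \<inter> cball 0 (real (nat \<lceil>s\<rceil>))"
  have "finite B"
    unfolding B_def by (rule poisson_pp_locally_finite[OF pp \<omega>]) simp
  have "s \<le> real (nat \<lceil>s\<rceil>)"
    by linarith
  then have "C \<subseteq> insert 0 B"
    by (auto simp: C_def B_def cities_def)
  then have "card C \<le> card (insert 0 B)"
    using \<open>finite B\<close> by (intro card_mono) auto
  also have "\<dots> \<le> 1 + card B"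
    using \<open>finite B\<close> by (simp add: card_insert_if)
  finally have card_C: "real (card C) \<le> 1 + real (pcount N (cball 0 (real (nat \<lceil>s\<rceil>))) \<omega>)"
    by (simp add: B_def pcount_def)
  have "(\<Sum>x\<in>C. \<Sum>y\<in>C. dist x y) \<le> (\<Sum>x\<in>C. \<Sum>y\<in>C. 2 * s)"
  proof (intro sum_mono)
    fix x y assume "x \<in> C" "y \<in> C"
    then have "norm x \<le> s" "norm y \<le> s"
      by (auto simp: C_def)
    moreover have "dist x y \<le> norm x + norm y"
      by (simp add: dist_norm norm_triangle_ineq4)
    ultimately show "dist x y \<le> 2 * s"
      by linarith
  qed
  also have "\<dots> = real (card C) ^ 2 * (2 * s)"
    by (simp add: power2_eq_square)
  finally have "pair_dist_sum N s \<omega> \<le> real (card C) ^ 2 * s"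
    by (simp add: pair_dist_sum_def Let_def C_def[symmetric])
  also have "\<dots> \<le> (1 + real (pcount N (cball 0 (real (nat \<lceil>s\<rceil>))) \<omega>)) ^ 2 * s"
    using card_C s by (intro mult_right_mono power_mono) auto
  finally show ?thesis
    by (simp add: mult.commute)
qed

lemma pair_dist_sum_power_le:
  assumes pp: "poisson_pp M N" and \<omega>: "\<omega> \<in> space M" and s: "s \<ge> 0"
  shows "pair_dist_sum N s \<omega> ^ k
           \<le> s ^ (2 * k) + (1 + real (pcount N (cball 0 (real (nat \<lceil>s\<rceil>))) \<omega>)) ^ (4 * k)"
proof -
  define x where "x = real (pcount N (cball 0 (real (nat \<lceil>s\<rceil>))) \<omega>)"
  have "pair_dist_sum N s \<omega> ^ k \<le> (s * (1 + x) ^ 2) ^ k"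
    using pair_dist_sum_le[OF assms] pair_dist_sum_nonneg by (intro power_mono) (auto simp: x_def)
  also have "\<dots> = s ^ k * (1 + x) ^ (2 * k)"
    by (simp add: power_mult_distrib power_mult)
  also have "\<dots> \<le> (s ^ k)\<^sup>2 + ((1 + x) ^ (2 * k))\<^sup>2"
    by (rule mult_le_sum_squares)
  also have "\<dots> = s ^ (2 * k) + (1 + x) ^ (4 * k)"
    by (simp flip: power_mult add: mult.commute)
  finally show ?thesis
    by (simp add: x_def)
qed

lemma integrable_if_dominated_by_sum:
  fixes f g h :: "'a \<Rightarrow> real"
  assumes f_meas: "f \<in> borel_measurable M"
    and g_meas: "g \<in> borel_measurable M" and h_meas: "h \<in> borel_measurable M"
    and bound: "\<And>\<omega>. \<omega> \<in> space M \<Longrightarrow> norm (f \<omega>) \<le> g \<omega> + h \<omega>"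
    and g_nonneg: "\<And>\<omega>. \<omega> \<in> space M \<Longrightarrow> 0 \<le> g \<omega>"
    and h_nonneg: "\<And>\<omega>. \<omega> \<in> space M \<Longrightarrow> 0 \<le> h \<omega>"
    and g_finite: "(\<integral>\<^sup>+\<omega>. ennreal (g \<omega>) \<partial>M) < \<infinity>"
    and h_finite: "(\<integral>\<^sup>+\<omega>. ennreal (h \<omega>) \<partial>M) < \<infinity>"
  shows "integrable M f"
proof -
  have "(\<integral>\<^sup>+\<omega>. ennreal (norm (f \<omega>)) \<partial>M) \<le> (\<integral>\<^sup>+\<omega>. ennreal (g \<omega>) + ennreal (h \<omega>) \<partial>M)"
  proof (rule nn_integral_mono)
    fix \<omega> assume \<omega>: "\<omega> \<in> space M"
    have "ennreal (norm (f \<omega>)) \<le> ennreal (g \<omega> + h \<omega>)"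
      using bound[OF \<omega>] by (rule ennreal_leI)
    also have "\<dots> = ennreal (g \<omega>) + ennreal (h \<omega>)"
      using g_nonneg[OF \<omega>] h_nonneg[OF \<omega>] by (rule ennreal_plus)
    finally show "ennreal (norm (f \<omega>)) \<le> ennreal (g \<omega>) + ennreal (h \<omega>)" .
  qed
  also have "\<dots> = (\<integral>\<^sup>+\<omega>. ennreal (g \<omega>) \<partial>M) + (\<integral>\<^sup>+\<omega>. ennreal (h \<omega>) \<partial>M)"
    using measurable_compose[OF g_meas measurable_ennreal] measurable_compose[OF h_meas measurable_ennreal]
    by (rule nn_integral_add)
  also have "\<dots> < \<infinity>"
    using g_finite h_finite by (simp only: infinity_ennreal_def ennreal_add_less_top)
  finally show ?thesis
    using f_meas by (subst integrable_iff_bounded) auto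
qed

text \<open>The count in the disc of random radius \<open>\<lceil>\<Sigma>\<rceil>\<close> has all moments when \<open>\<Sigma>\<close> does: apply
  the random-index lemma to \<open>Y\<^sub>j = (1 + X\<^sub>j)^r\<close>, whose second moments grow like
  \<open>(j+1)^(4r)\<close>, with the index \<open>\<nu> = \<lceil>\<Sigma>\<rceil>\<close>.\<close>

lemma random_ball_count_moment_finite:
  fixes \<Sigma> :: "'a \<Rightarrow> real"
  assumes pp: "poisson_pp M N"
    and \<Sigma>_nonneg: "\<And>\<omega>. \<omega> \<in> space M \<Longrightarrow> \<Sigma> \<omega> \<ge> 0"
    and \<Sigma>_moments: "\<And>k::nat. integrable M (\<lambda>\<omega>. \<Sigma> \<omega> ^ k)"
  shows "(\<lambda>\<omega>. (1 + real (pcount N (cball 0 (real (nat \<lceil>\<Sigma> \<omega>\<rceil>))) \<omega>)) ^ r) \<in> borel_measurable M"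
    and "(\<integral>\<^sup>+\<omega>. ennreal ((1 + real (pcount N (cball 0 (real (nat \<lceil>\<Sigma> \<omega>\<rceil>))) \<omega>)) ^ r) \<partial>M) < \<infinity>"
proof -
  interpret prob_space M
    using poisson_pp_prob_space[OF pp] .
  define \<nu> where "\<nu> \<omega> = nat \<lceil>\<Sigma> \<omega>\<rceil>" for \<omega>
  define Y where "Y j \<omega> = (1 + real (pcount N (cball 0 (real j)) \<omega>)) ^ r" for j \<omega>
  have Y_meas: "Y j \<in> borel_measurable M" for j
    using poisson_pp_count_measurable[OF pp, of "cball 0 (real j)"] unfolding Y_def by simp
  have "\<Sigma> \<in> borel_measurable M"
    using borel_measurable_integrable[OF \<Sigma>_moments[of 1]] by simp
  then have \<nu>_meas: "\<nu> \<in> measurable M (count_space UNIV)"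
    unfolding \<nu>_def by measurable
  show "(\<lambda>\<omega>. (1 + real (pcount N (cball 0 (real (nat \<lceil>\<Sigma> \<omega>\<rceil>))) \<omega>)) ^ r) \<in> borel_measurable M"
    using measurable_compose_countable[OF Y_meas \<nu>_meas] by (simp add: Y_def \<nu>_def)
  have "(\<integral>\<^sup>+\<omega>. ennreal (Y (\<nu> \<omega>) \<omega>) \<partial>M) < \<infinity>"
  proof (rule nn_integral_random_index_finite[OF Y_meas _ _ \<nu>_meas])
    show "(\<integral>\<^sup>+\<omega>. ennreal (Y j \<omega> ^ 2) \<partial>M) \<le> ennreal (2 * exp 1 * fact (2 * r) *
        (unit_ball_vol 2 + 2) ^ (2 * r) * real (j + 1) ^ (2 * (2 * r)))" for j
      using ball_count_moment[OF pp, of j "2 * r"] by (simp add: Y_def mult.commute[of r] flip: power_mult)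
    show "(\<integral>\<^sup>+\<omega>. ennreal (real (\<nu> \<omega> + 1) ^ (2 * (2 * r) + 2)) \<partial>M) < \<infinity>"
      unfolding \<nu>_def using \<Sigma>_nonneg \<Sigma>_moments by (rule ceiling_moment_finite)
  qed simp
  then show "(\<integral>\<^sup>+\<omega>. ennreal ((1 + real (pcount N (cball 0 (real (nat \<lceil>\<Sigma> \<omega>\<rceil>))) \<omega>)) ^ r) \<partial>M) < \<infinity>"
    by (simp add: Y_def \<nu>_def)
qed

theorem lemma3:
  fixes M :: "'a measure" and N :: "'a \<Rightarrow> (real^2) set" and \<Sigma> :: "'a \<Rightarrow> real"
  assumes "poisson_pp M N"
    and "\<And>\<omega>. \<omega> \<in> space M \<Longrightarrow> \<Sigma> \<omega> \<ge> 0"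
    and "\<And>k::nat. integrable M (\<lambda>\<omega>. \<Sigma> \<omega> ^ k)"
  shows "\<forall>k::nat. integrable M (\<lambda>\<omega>. pair_dist_sum N (\<Sigma> \<omega>) \<omega> ^ k)"
proof (intro allI)
  fix k :: nat
  note pp = assms(1) and count_moment = random_ball_count_moment_finite[OF assms, of "4 * k"]
  have \<Sigma>_meas: "\<Sigma> \<in> borel_measurable M"
    using borel_measurable_integrable[OF assms(3)[of 1]] by simp
  show "integrable M (\<lambda>\<omega>. pair_dist_sum N (\<Sigma> \<omega>) \<omega> ^ k)"
  proof (rule integrable_if_dominated_by_sum[OF _ _ count_moment(1)])
    show "(\<lambda>\<omega>. pair_dist_sum N (\<Sigma> \<omega>) \<omega> ^ k) \<in> borel_measurable M"
      using pair_dist_sum_random_radius_measurable[OF pp \<Sigma>_meas] by measurable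
    show "(\<lambda>\<omega>. \<Sigma> \<omega> ^ (2 * k)) \<in> borel_measurable M"
      using \<Sigma>_meas by measurable
    show "norm (pair_dist_sum N (\<Sigma> \<omega>) \<omega> ^ k) \<le> \<Sigma> \<omega> ^ (2 * k) +
        (1 + real (pcount N (cball 0 (real (nat \<lceil>\<Sigma> \<omega>\<rceil>))) \<omega>)) ^ (4 * k)" if "\<omega> \<in> space M" for \<omega>
      using pair_dist_sum_power_le[OF pp that assms(2)[OF that]] pair_dist_sum_nonneg[of N "\<Sigma> \<omega>" \<omega>]
      by simp
    show "(\<integral>\<^sup>+\<omega>. ennreal (\<Sigma> \<omega> ^ (2 * k)) \<partial>M) < \<infinity>"
      using assms(2) by (intro nn_integral_finite_if_dominated[OF assms(3)]) auto
  qed (use assms(2) count_moment(2) in auto)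
qed

end
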